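(* Let $P\in\mathbb{C}[y]$ with $\deg P\geq 2$, $\delta\in\mathbb{C}\setminus\{0\}$, $h_1(x,y)=(y,P(y)-\delta x)$, $\theta\in(0,2\pi)\setminus\{\frac{\pi}{2},\pi,\frac{3\pi}{2}\}$, $R_\theta$ the linear map of $\mathbb{C}^2$ with matrix $\begin{pmatrix}\cos\theta&-\sin\theta\\ \sin\theta&\cos\theta\end{pmatrix}$, $h_2=R_\theta^{-1}\circ h_1\circ R_\theta$ and $G=\langle h_1,h_2\rangle$. Let $\nu=a_1\delta_{h_1}+a_2\delta_{h_2}+a_3\delta_{h_1^{-1}}+a_4\delta_{h_2^{-1}}$ with $a_i>0$ and $\sum_{i=1}^4a_i=1$, and equip $G^{\mathbb{N}}$ with the product measure $\nu^{\mathbb{N}}$. For $\omega=(\omega_n)\in G^{\mathbb{N}}$ put $S_n(\omega)=\omega_n\circ\cdots\circ\omega_1$. Then for $\nu^{\mathbb{N}}$-almost every $\omega$ the sequence $(\mathrm{length}(S_n(\omega)))_{n\in\mathbb{N}}$ is unbounded; in fact there is $\epsilon>0$ such that for $\nu^{\mathbb{N}}$-almost every $\omega$ one has $\mathrm{length}(S_n(\omega))\geq\epsilon n$ for all sufficiently large $n$.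
   Context: $\mathrm{length}(g)$ for $g\in G$ denotes the length of $g$ as a reduced word in the letters $h_1^{\pm1},h_2^{\pm1}$. *)

theory Defs
  imports "HOL-Probability.Probability" "HOL-Computational_Algebra.Polynomial"
begin

type_synonym cmap = "complex \<times> complex \<Rightarrow> complex \<times> complex"

definition henon :: "complex poly \<Rightarrow> complex \<Rightarrow> cmap" where
  "henon P d = (\<lambda>(x, y). (y, poly P y - d * x))"

definition henon_inv :: "complex poly \<Rightarrow> complex \<Rightarrow> cmap" where
  "henon_inv P d = (\<lambda>(u, v). ((poly P u - v) / d, u))"

definition rot :: "real \<Rightarrow> cmap" where
  "rot t = (\<lambda>(x, y). (complex_of_real (cos t) * x - complex_of_real (sin t) * y,
                      complex_of_real (sin t) * x + complex_of_real (cos t) * y))"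

text \<open>Generators indexed by letters: 0 = h1, 1 = h2, 2 = h1^-1, 3 = h2^-1,
  where h2 = R^-1 o h1 o R, and R^-1 = rot (- t).\<close>
definition gen :: "complex poly \<Rightarrow> complex \<Rightarrow> real \<Rightarrow> nat \<Rightarrow> cmap" where
  "gen P d t i =
     (if i = 0 then henon P d
      else if i = 1 then rot (- t) \<circ> henon P d \<circ> rot t
      else if i = 2 then henon_inv P d
      else rot (- t) \<circ> henon_inv P d \<circ> rot t)"

definition word_eval :: "complex poly \<Rightarrow> complex \<Rightarrow> real \<Rightarrow> nat list \<Rightarrow> cmap" where
  "word_eval P d t w = foldr (\<lambda>i f. gen P d t i \<circ> f) w id"

definition word_length :: "complex poly \<Rightarrow> complex \<Rightarrow> real \<Rightarrow> cmap \<Rightarrow> nat" where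
  "word_length P d t g =
     (LEAST n. \<exists>w. length w = n \<and> set w \<subseteq> {0..3} \<and> word_eval P d t w = g)"

definition nu :: "complex poly \<Rightarrow> complex \<Rightarrow> real \<Rightarrow> real \<Rightarrow> real \<Rightarrow> real \<Rightarrow> real \<Rightarrow> cmap pmf" where
  "nu P d t a1 a2 a3 a4 =
     map_pmf (gen P d t)
       (embed_pmf (\<lambda>i::nat. if i = 0 then a1 else if i = 1 then a2
                    else if i = 2 then a3 else if i = 3 then a4 else 0))"

text \<open>S_n(omega) = omega_n o ... o omega_1 (omega indexed from 0 here: omega 0 = omega_1).\<close>
definition Sn :: "(nat \<Rightarrow> cmap) \<Rightarrow> nat \<Rightarrow> cmap" where
  "Sn \<omega> n = foldr (\<lambda>k f. f \<circ> \<omega> k) [0..<n] id"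

end

theory Submission
  imports Defs "HOL-Real_Asymp.Real_Asymp"
begin

(* Ping-pong: outside a large ball, the letter j (h1, h2, h1^-1, h2^-1 for j = 0, 1, 2, 3)
   maps a wide cone around its axis (the y-axis, its image under R_theta^-1, the x-axis, its
   image under R_theta^-1) into a narrow cone around the same axis, raising the norm from |z|
   to at least |z|^(3/2). As theta is not a multiple of pi/2, the narrow cone of each letter
   lies in the wide cones of all letters except its inverse. So a reduced word w moves a
   suitable base point p to norm at least |p|^((3/2)^|w|), whereas every word u satisfies
   |u p| <= |p|^(D^|u|) with D = deg P + 1; hence the element represented by w has word
   length at least c |w|. In particular no nonempty reduced word acts trivially, so the four
   generators are distinct.

   The reduced word of S_n performs a random walk on the free group. With
   tau = min a_i / 2, beta_j = a_(j^-1) / (a_(j^-1) + tau) and the potential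
   V(w) = prod_i beta_(w_i), one step multiplies the expectation of V by at most
   rho = 1 - tau/3 < 1. As V(w) >= (min_j beta_j)^|w|, Markov's inequality bounds
   P(|w_n| <= eps n) by a geometric sequence for small eps > 0, and Borel-Cantelli
   yields |w_n| > eps n eventually, almost surely. *)

section \<open>Reduced words in four letters\<close>

definition inv_letter :: "nat \<Rightarrow> nat" where
  "inv_letter i = (if i = 0 then 2 else if i = 1 then 3 else if i = 2 then 0 else 1)"

lemma inv_letter_lt4: "inv_letter i < 4"
  by (simp add: inv_letter_def)

lemma inv_letter_inv_letter: "i < 4 \<Longrightarrow> inv_letter (inv_letter i) = i"
  by (auto simp: inv_letter_def)

lemma inv_letter_eq_iff: "a < 4 \<Longrightarrow> j < 4 \<Longrightarrow> a = inv_letter j \<longleftrightarrow> j = inv_letter a"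
  by (auto simp: inv_letter_def)

fun reduced :: "nat list \<Rightarrow> bool" where
  "reduced [] = True"
| "reduced [a] = (a < 4)"
| "reduced (a # b # w) = (a < 4 \<and> a \<noteq> inv_letter b \<and> reduced (b # w))"

lemma reduced_ConsD: "reduced (a # w) \<Longrightarrow> a < 4 \<and> reduced w"
  by (cases w) auto

lemma reduced_letters: "reduced w \<Longrightarrow> set w \<subseteq> {0..3}"
  by (induction w rule: reduced.induct) auto

definition push_letter :: "nat list \<Rightarrow> nat \<Rightarrow> nat list" where
  "push_letter w j = (case w of [] \<Rightarrow> [j] | a # r \<Rightarrow> if a = inv_letter j then r else j # w)"

lemma push_letter_letters: "set w \<subseteq> {..<4} \<Longrightarrow> j < 4 \<Longrightarrow> set (push_letter w j) \<subseteq> {..<4}"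
  by (auto simp: push_letter_def split: list.splits)

lemma push_letter_Cons:
  "a < 4 \<Longrightarrow> j < 4 \<Longrightarrow> push_letter (a # r) j = (if j = inv_letter a then r else j # a # r)"
  by (simp add: push_letter_def inv_letter_eq_iff)

lemma reduced_push_letter: "reduced w \<Longrightarrow> j < 4 \<Longrightarrow> reduced (push_letter w j)"
proof (cases w)
  case (Cons a r)
  assume "reduced w" "j < 4"
  then have "a < 4" "reduced r"
    using reduced_ConsD[of a r] unfolding Cons by blast+
  show ?thesis
  proof (cases "j = inv_letter a")
    case True
    then show ?thesis
      using \<open>a < 4\<close> \<open>j < 4\<close> \<open>reduced r\<close> by (simp add: Cons push_letter_Cons)
  next
    case False
    then have "push_letter w j = j # w"
      using \<open>a < 4\<close> \<open>j < 4\<close> by (simp add: Cons push_letter_Cons)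
    then show ?thesis
      using False \<open>j < 4\<close> \<open>reduced w\<close> \<open>a < 4\<close> inv_letter_eq_iff by (simp add: Cons)
  qed
qed (simp add: push_letter_def)

lemma word_eval_Nil [simp]: "word_eval P d t [] = id"
  by (simp add: word_eval_def)

lemma word_eval_Cons [simp]: "word_eval P d t (i # w) = gen P d t i \<circ> word_eval P d t w"
  by (simp add: word_eval_def)

lemma henon_inv_henon [simp]: "d \<noteq> 0 \<Longrightarrow> henon_inv P d (henon P d z) = z"
  by (cases z) (simp add: henon_def henon_inv_def)

lemma henon_henon_inv [simp]: "d \<noteq> 0 \<Longrightarrow> henon P d (henon_inv P d z) = z"
  by (cases z) (simp add: henon_def henon_inv_def)

lemma norm_swap [simp]: "norm (prod.swap z) = norm z"
  by (cases z) (simp add: norm_Pair add.commute)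

lemma norm_rot [simp]: "norm (rot t z) = norm z"
proof (cases z)
  case (Pair x y)
  have "(cmod (cos t * x - sin t * y))\<^sup>2 + (cmod (sin t * x + cos t * y))\<^sup>2
      = ((cos t)\<^sup>2 + (sin t)\<^sup>2) * ((cmod x)\<^sup>2 + (cmod y)\<^sup>2)"
    unfolding cmod_power2 by simp (use sin_cos_squared_add[of t] in algebra)
  then show ?thesis
    by (simp add: Pair rot_def norm_Pair)
qed

lemma rot_eq_0_iff [simp]: "rot t z = 0 \<longleftrightarrow> z = 0"
  by (metis norm_eq_zero norm_rot)

lemma rot_neg_rot [simp]: "rot (- t) (rot t z) = z"
proof (cases z)
  case (Pair x y)
  have "complex_of_real (cos t) * complex_of_real (cos t) + complex_of_real (sin t) * complex_of_real (sin t) = 1"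
    by (metis of_real_add of_real_mult of_real_1 sin_cos_squared_add3)
  then show ?thesis
    by (simp add: Pair rot_def algebra_simps) (simp flip: distrib_left distrib_right)
qed

lemma rot_rot_neg [simp]: "rot t (rot (- t) z) = z"
  using rot_neg_rot[of "- t" z] by simp

lemma rot_swap: "rot (- t) (prod.swap z) = prod.swap (rot t z)"
  by (cases z) (simp add: rot_def algebra_simps)

lemma gen_inv_letter_gen: "d \<noteq> 0 \<Longrightarrow> i < 4 \<Longrightarrow> gen P d t (inv_letter i) (gen P d t i z) = z"
  by (auto simp: gen_def inv_letter_def)

lemma word_eval_push_letter:
  assumes "d \<noteq> 0" "j < 4" "set w \<subseteq> {..<4}"
  shows "word_eval P d t (push_letter w j) = gen P d t j \<circ> word_eval P d t w"
proof (cases w)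
  case (Cons a r)
  then have "a < 4"
    using assms(3) by simp
  then show ?thesis
    using Cons assms gen_inv_letter_gen[OF assms(1) \<open>a < 4\<close>] by (auto simp: push_letter_Cons fun_eq_iff)
qed (simp add: push_letter_def)

section \<open>Cones and rotations\<close>

definition vcone :: "real \<Rightarrow> complex \<times> complex \<Rightarrow> bool" where
  "vcone c z \<longleftrightarrow> cmod (fst z) \<le> c * cmod (snd z)"

definition hcone :: "real \<Rightarrow> complex \<times> complex \<Rightarrow> bool" where
  "hcone c z \<longleftrightarrow> cmod (snd z) \<le> c * cmod (fst z)"

lemma hcone_iff_vcone_swap: "hcone c z \<longleftrightarrow> vcone c (prod.swap z)"
  by (simp add: hcone_def vcone_def split_beta)

lemma vcone_mono: "c \<le> c' \<Longrightarrow> vcone c z \<Longrightarrow> vcone c' z"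
  unfolding vcone_def by (meson mult_right_mono norm_ge_zero order_trans)

lemma hcone_mono: "c \<le> c' \<Longrightarrow> hcone c z \<Longrightarrow> hcone c' z"
  unfolding hcone_def by (meson mult_right_mono norm_ge_zero order_trans)

lemma not_vcone_imp_hcone: "0 < c \<Longrightarrow> \<not> vcone c z \<Longrightarrow> hcone (1 / c) z"
  by (simp add: vcone_def hcone_def field_simps)

lemma not_hcone_imp_vcone: "0 < c \<Longrightarrow> \<not> hcone c z \<Longrightarrow> vcone (1 / c) z"
  by (simp add: vcone_def hcone_def field_simps)

lemma norm_lin_comb_bounds:
  fixes \<alpha> \<beta> \<kappa> :: real and p q :: complex
  assumes "\<bar>\<alpha>\<bar> \<le> 1" "\<bar>\<beta>\<bar> \<le> 1" "cmod p \<le> \<kappa> * cmod q"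
  shows "(\<bar>\<beta>\<bar> - \<kappa>) * cmod q \<le> cmod (\<alpha> * p + \<beta> * q)"
    and "cmod (\<alpha> * p + \<beta> * q) \<le> (\<kappa> + 1) * cmod q"
proof -
  have ap: "cmod (\<alpha> * p) \<le> \<kappa> * cmod q"
    using assms(1,3) mult_mono[of "\<bar>\<alpha>\<bar>" 1 "cmod p"] by (simp add: norm_mult)
  have bq: "cmod (\<beta> * q) = \<bar>\<beta>\<bar> * cmod q" "\<bar>\<beta>\<bar> * cmod q \<le> cmod q"
    using assms(2) mult_right_mono[of "\<bar>\<beta>\<bar>" 1 "cmod q"] by (simp_all add: norm_mult)
  show "(\<bar>\<beta>\<bar> - \<kappa>) * cmod q \<le> cmod (\<alpha> * p + \<beta> * q)"
    using norm_diff_ineq[of "\<beta> * q" "\<alpha> * p"] ap bq by (simp add: algebra_simps)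
  show "cmod (\<alpha> * p + \<beta> * q) \<le> (\<kappa> + 1) * cmod q"
    using norm_triangle_ineq[of "\<alpha> * p" "\<beta> * q"] ap bq by (simp add: algebra_simps)
qed

definition cone_slope :: "real \<Rightarrow> real \<Rightarrow> bool" where
  "cone_slope \<kappa> t \<longleftrightarrow> 0 < \<kappa> \<and> \<kappa> * (\<kappa> + 2) < \<bar>cos t\<bar> \<and> \<kappa> * (\<kappa> + 2) < \<bar>sin t\<bar>"

lemma cone_slope_uminus [simp]: "cone_slope \<kappa> (- t) = cone_slope \<kappa> t"
  by (simp add: cone_slope_def)

lemma cone_slope_pos: "cone_slope \<kappa> t \<Longrightarrow> 0 < \<kappa>"
  by (simp add: cone_slope_def)

lemma cone_slope_lt_1:
  assumes "cone_slope \<kappa> t"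
  shows "\<kappa> < 1"
proof (rule ccontr)
  assume "\<not> \<kappa> < 1"
  then have "1 * 3 \<le> \<kappa> * (\<kappa> + 2)"
    by (intro mult_mono) auto
  then show False
    using assms abs_cos_le_one[of t] by (simp add: cone_slope_def)
qed

lemma rot_leaves_vcone:
  assumes "cone_slope \<kappa> \<theta>" "vcone \<kappa> z" "z \<noteq> 0"
  shows "\<not> vcone \<kappa> (rot \<theta> z) \<and> \<not> hcone \<kappa> (rot \<theta> z)"
proof -
  have \<kappa>: "0 < \<kappa>" "\<kappa> * (\<kappa> + 2) < \<bar>cos \<theta>\<bar>" "\<kappa> * (\<kappa> + 2) < \<bar>sin \<theta>\<bar>"
    using assms(1) by (simp_all add: cone_slope_def)
  obtain x y where z: "z = (x, y)" by (cases z)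
  have xy: "cmod x \<le> \<kappa> * cmod y"
    using assms(2) by (simp add: vcone_def z)
  have "y \<noteq> 0"
    using xy assms(3) by (auto simp: z zero_prod_def)
  then have y: "cmod y > 0" by simp
  define X where "X = fst (rot \<theta> z)"
  define Y where "Y = snd (rot \<theta> z)"
  have "X = of_real (cos \<theta>) * x + of_real (- sin \<theta>) * y"
    by (simp add: X_def rot_def z)
  then have X: "(\<bar>sin \<theta>\<bar> - \<kappa>) * cmod y \<le> cmod X" "cmod X \<le> (\<kappa> + 1) * cmod y"
    using norm_lin_comb_bounds[of "cos \<theta>" "- sin \<theta>" x \<kappa> y] xy by simp_all
  have "Y = of_real (sin \<theta>) * x + of_real (cos \<theta>) * y"
    by (simp add: Y_def rot_def z)
  then have Y: "(\<bar>cos \<theta>\<bar> - \<kappa>) * cmod y \<le> cmod Y" "cmod Y \<le> (\<kappa> + 1) * cmod y"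
    using norm_lin_comb_bounds[of "sin \<theta>" "cos \<theta>" x \<kappa> y] xy by simp_all
  have "\<kappa> * (\<kappa> + 1) * cmod y < (\<bar>cos \<theta>\<bar> - \<kappa>) * cmod y"
       "\<kappa> * (\<kappa> + 1) * cmod y < (\<bar>sin \<theta>\<bar> - \<kappa>) * cmod y"
    using \<kappa>(2,3) y by (intro mult_strict_right_mono; simp add: algebra_simps)+
  moreover have "\<kappa> * cmod X \<le> \<kappa> * (\<kappa> + 1) * cmod y" "\<kappa> * cmod Y \<le> \<kappa> * (\<kappa> + 1) * cmod y"
    using X(2) Y(2) \<kappa>(1) by (simp_all add: mult.assoc)
  ultimately have "\<kappa> * cmod X < cmod Y" "\<kappa> * cmod Y < cmod X"
    using X(1) Y(1) by linarith+
  then show ?thesis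
    by (simp add: vcone_def hcone_def X_def Y_def)
qed

lemma rot_leaves_narrow_cones:
  assumes "cone_slope \<kappa> \<theta>" "vcone \<kappa> z \<or> hcone \<kappa> z" "z \<noteq> 0"
  shows "\<not> vcone \<kappa> (rot \<theta> z) \<and> \<not> hcone \<kappa> (rot \<theta> z)"
  using assms(2)
proof
  assume "hcone \<kappa> z"
  moreover have "prod.swap z \<noteq> 0"
    using assms(3) by (cases z) (auto simp: zero_prod_def)
  ultimately have "\<not> vcone \<kappa> (rot (- \<theta>) (prod.swap z)) \<and> \<not> hcone \<kappa> (rot (- \<theta>) (prod.swap z))"
    using assms(1) by (intro rot_leaves_vcone) (auto simp: hcone_iff_vcone_swap)
  then show ?thesis
    by (simp add: rot_swap hcone_iff_vcone_swap)
qed (use assms rot_leaves_vcone in blast)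

definition letter_cone :: "real \<Rightarrow> nat \<Rightarrow> real \<Rightarrow> complex \<times> complex \<Rightarrow> bool" where
  "letter_cone t j c z =
     (if j = 0 then vcone c z else if j = 1 then vcone c (rot t z)
      else if j = 2 then hcone c z else hcone c (rot t z))"

lemma rot_exchanges_narrow_cones:
  assumes "cone_slope \<kappa> t" "z \<noteq> 0"
  shows "vcone \<kappa> z \<or> hcone \<kappa> z \<Longrightarrow> \<not> vcone \<kappa> (rot t z) \<and> \<not> hcone \<kappa> (rot t z)"
    and "vcone \<kappa> (rot t z) \<or> hcone \<kappa> (rot t z) \<Longrightarrow> \<not> vcone \<kappa> z \<and> \<not> hcone \<kappa> z"
  using rot_leaves_narrow_cones[of \<kappa> t z] rot_leaves_narrow_cones[of \<kappa> "- t" "rot t z"] assms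
  by simp_all

lemma letter_cone_containment:
  assumes "cone_slope \<kappa> t" "j < 4" "k < 4" "j \<noteq> inv_letter k" "z \<noteq> 0" "letter_cone t k \<kappa> z"
  shows "letter_cone t j (1 / \<kappa>) z"
proof -
  have \<kappa>: "0 < \<kappa>" "\<kappa> < 1"
    using cone_slope_pos[OF assms(1)] cone_slope_lt_1[OF assms(1)] .
  then have "\<kappa> \<le> 1 / \<kappa>"
    by (simp add: field_simps mult_le_one)
  then have narrow: "vcone \<kappa> w \<Longrightarrow> vcone (1 / \<kappa>) w" "hcone \<kappa> w \<Longrightarrow> hcone (1 / \<kappa>) w" for w
    using vcone_mono hcone_mono by blast+
  have outside: "\<not> vcone \<kappa> w \<and> \<not> hcone \<kappa> w \<Longrightarrow> vcone (1 / \<kappa>) w \<and> hcone (1 / \<kappa>) w" for w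
    using \<kappa>(1) not_vcone_imp_hcone not_hcone_imp_vcone by blast
  have "vcone \<kappa> z \<or> hcone \<kappa> z \<Longrightarrow> vcone (1 / \<kappa>) (rot t z) \<and> hcone (1 / \<kappa>) (rot t z)"
       "vcone \<kappa> (rot t z) \<or> hcone \<kappa> (rot t z) \<Longrightarrow> vcone (1 / \<kappa>) z \<and> hcone (1 / \<kappa>) z"
    using outside rot_exchanges_narrow_cones[OF assms(1,5)] by blast+
  moreover have "j = 0 \<or> j = 1 \<or> j = 2 \<or> j = 3" "k = 0 \<or> k = 1 \<or> k = 2 \<or> k = 3"
    using assms(2,3) by auto
  ultimately show ?thesis
    using narrow assms(4,6) by (elim disjE) (simp_all add: letter_cone_def inv_letter_def)
qed

lemma cos_sin_nonzero:
  fixes t :: real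
  assumes "0 < t" "t < 2 * pi" "t \<noteq> pi / 2" "t \<noteq> pi" "t \<noteq> 3 * pi / 2"
  shows "cos t \<noteq> 0" and "sin t \<noteq> 0"
proof
  assume "cos t = 0"
  then obtain n :: int where n: "t = of_int n * pi + pi / 2"
    by (auto simp: cos_zero_iff_int2)
  then have "0 < (of_int n + 1 / 2) * pi" "(of_int n + 1 / 2) * pi < 2 * pi"
    using assms(1,2) by (simp_all add: algebra_simps)
  then have "0 < of_int n + (1 / 2 :: real)" "of_int n + (1 / 2 :: real) < 2"
    by (simp_all add: zero_less_mult_iff)
  then have "n = 0 \<or> n = 1"
    by linarith
  then show False
    using n assms(3,5) by (auto simp: algebra_simps)
next
  show "sin t \<noteq> 0"
  proof
    assume "sin t = 0"
    then obtain i :: int where i: "t = of_int i * pi"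
      by (auto simp: sin_zero_iff_int2)
    then have "0 < i" "i < 2"
      using assms(1,2) by (simp_all add: zero_less_mult_iff)
    then have "i = 1"
      by simp
    then show False
      using i assms(4) by simp
  qed
qed

lemma exists_cone_slope:
  fixes t :: real
  assumes "cos t \<noteq> 0" "sin t \<noteq> 0"
  shows "\<exists>\<kappa>. cone_slope \<kappa> t"
proof -
  define m where "m = min \<bar>cos t\<bar> \<bar>sin t\<bar>"
  have m: "0 < m" "m \<le> 1"
    using assms by (auto simp: m_def min_le_iff_disj)
  have "m / 4 * (m / 4 + 2) \<le> m / 4 * (9 / 4)"
    using m by (intro mult_left_mono) auto
  also have "\<dots> < m"
    using m by simp
  finally show ?thesis
    using m by (intro exI[of _ "m / 4"]) (auto simp: m_def cone_slope_def)
qed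

lemma exists_point_in_wide_letter_cones:
  assumes "0 < \<kappa>" "\<kappa> \<le> 1"
  shows "\<exists>p. r \<le> norm p \<and> (\<forall>j. letter_cone t j (1 / \<kappa>) p)"
proof -
  define s where "s = max r 0"
  have "0 \<le> s"
    by (simp add: s_def)
  define p where "p = (complex_of_real s, \<i> * complex_of_real s)"
  have "fst (rot t p) = Complex (s * cos t) (- (s * sin t))"
       "snd (rot t p) = Complex (s * sin t) (s * cos t)"
    by (simp_all add: p_def rot_def complex_eq_iff)
  \<comment> \<open>the factor \<open>\<i>\<close> makes both coordinates of \<open>rot t p\<close> have modulus \<open>s\<close> as well\<close>
  then have "cmod (fst (rot t p)) = s" "cmod (snd (rot t p)) = s"
    by (simp_all add: complex_norm power_mult_distrib s_def flip: distrib_left)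
  moreover have "cmod (fst p) = s" "cmod (snd p) = s"
    by (simp_all add: p_def s_def norm_mult)
  moreover have "s \<le> 1 / \<kappa> * s"
    using mult_left_le_one_le[of s \<kappa>] assms by (simp add: field_simps \<open>0 \<le> s\<close>)
  ultimately have "letter_cone t j (1 / \<kappa>) p" for j
    by (simp add: letter_cone_def vcone_def hcone_def)
  moreover have "r \<le> norm p"
    using norm_fst_le[of "fst p" "snd p"] by (simp add: p_def s_def)
  ultimately show ?thesis by blast
qed

section \<open>Growth of Henon maps\<close>

lemma henon_inv_conv_swap:
  "henon_inv P d = prod.swap \<circ> henon (smult (inverse d) P) (inverse d) \<circ> prod.swap"
  by (auto simp: fun_eq_iff henon_def henon_inv_def divide_inverse algebra_simps)

lemma poly_quadratic_lower_bound:
  fixes P :: "complex poly"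
  assumes "degree P \<ge> 2"
  shows "\<exists>c>0. \<exists>r. \<forall>y. r \<le> cmod y \<longrightarrow> c * (cmod y)\<^sup>2 \<le> cmod (poly P y)"
proof -
  define c where "c = cmod (lead_coeff P) / 2"
  have "P \<noteq> 0"
    using assms by auto
  then have c: "c > 0"
    by (simp add: c_def)
  have "\<forall>\<^sub>F y in at_infinity. dist (poly P y / y ^ degree P) (lead_coeff P) < c"
    using poly_divide_tendsto_aux[of P] c by (rule tendstoD)
  moreover have "\<forall>\<^sub>F y in at_infinity. 1 \<le> cmod y"
    by (simp add: eventually_at_infinity) blast
  ultimately have "\<forall>\<^sub>F y in at_infinity. c * (cmod y)\<^sup>2 \<le> cmod (poly P y)"
  proof eventually_elim
    case (elim y)
    then have "y \<noteq> 0" by auto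
    have "c \<le> cmod (poly P y / y ^ degree P)"
      using elim(1) norm_triangle_ineq2[of "lead_coeff P" "poly P y / y ^ degree P"]
      by (simp add: c_def dist_norm norm_minus_commute)
    then have "c * cmod y ^ degree P \<le> cmod (poly P y)"
      using \<open>y \<noteq> 0\<close> by (simp add: norm_divide norm_power field_simps)
    moreover have "(cmod y)\<^sup>2 \<le> cmod y ^ degree P"
      using elim(2) assms by (rule power_increasing[rotated])
    ultimately show ?case
      using c by (meson mult_left_mono less_imp_le order_trans)
  qed
  then show ?thesis
    using c by (auto simp: eventually_at_infinity)
qed

lemma henon_snd_lower_bound:
  fixes P :: "complex poly"
  assumes "degree P \<ge> 2"
  shows "\<exists>k>0. \<exists>r. \<forall>x y. r \<le> cmod y \<longrightarrow> cmod x \<le> C * cmod y \<longrightarrow>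
           k * (cmod y)\<^sup>2 \<le> cmod (poly P y - d * x)"
proof -
  obtain c r where c: "c > 0" and r: "\<And>y. r \<le> cmod y \<Longrightarrow> c * (cmod y)\<^sup>2 \<le> cmod (poly P y)"
    using poly_quadratic_lower_bound[OF assms] by blast
  have "c / 2 * (cmod y)\<^sup>2 \<le> cmod (poly P y - d * x)"
    if y: "max r (2 * cmod d * C / c) \<le> cmod y" and x: "cmod x \<le> C * cmod y" for x y
  proof -
    have "cmod (d * x) \<le> cmod d * C * cmod y"
      using x by (simp add: norm_mult mult_left_mono mult.assoc)
    also have "\<dots> \<le> c / 2 * (cmod y)\<^sup>2"
    proof -
      have "cmod d * C \<le> c / 2 * cmod y"
        using y c by (simp add: field_simps)
      from mult_right_mono[OF this norm_ge_zero] show ?thesis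
        by (simp add: power2_eq_square mult.assoc)
    qed
    finally show ?thesis
      using r[of y] y norm_triangle_ineq2[of "poly P y" "d * x"] by simp
  qed
  then show ?thesis
    using c by (intro exI[of _ "c / 2"] conjI exI[of _ "max r (2 * cmod d * C / c)"]) auto
qed

lemma henon_snd_quadratic:
  fixes P :: "complex poly"
  assumes "degree P \<ge> 2" "0 \<le> C"
  shows "\<exists>k>0. \<exists>R. \<forall>z. R \<le> norm z \<longrightarrow> vcone C z \<longrightarrow> k * (norm z)\<^sup>2 \<le> cmod (snd (henon P d z))"
proof -
  obtain k r where k: "k > 0" and kr: "\<And>x y. r \<le> cmod y \<Longrightarrow> cmod x \<le> C * cmod y \<Longrightarrow>
      k * (cmod y)\<^sup>2 \<le> cmod (poly P y - d * x)"
    using henon_snd_lower_bound[OF assms(1)] by blast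
  have C: "0 < C + 1"
    using assms(2) by simp
  have "k / (C + 1)\<^sup>2 * (norm z)\<^sup>2 \<le> cmod (snd (henon P d z))"
    if "(C + 1) * r \<le> norm z" "vcone C z" for z
  proof -
    obtain x y where z: "z = (x, y)" by (cases z)
    have x: "cmod x \<le> C * cmod y"
      using \<open>vcone C z\<close> by (simp add: vcone_def z)
    have zy: "norm z \<le> (C + 1) * cmod y"
      using norm_Pair_le[of x y] x by (simp add: z algebra_simps)
    then have "r \<le> cmod y"
      using that(1) C by (meson mult_le_cancel_left_pos order_trans)
    have "k / (C + 1)\<^sup>2 * (norm z)\<^sup>2 \<le> k / (C + 1)\<^sup>2 * ((C + 1) * cmod y)\<^sup>2"
      using zy k by (intro mult_left_mono power_mono) auto
    also have "\<dots> = k * (cmod y)\<^sup>2"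
      using C by (simp add: power_mult_distrib)
    also have "\<dots> \<le> cmod (snd (henon P d z))"
      using kr[OF \<open>r \<le> cmod y\<close> x] by (simp add: henon_def z)
    finally show ?thesis .
  qed
  then show ?thesis
    using k C by (intro exI[of _ "k / (C + 1)\<^sup>2"] conjI exI[of _ "(C + 1) * r"]) auto
qed

lemma henon_maps_vcone:
  fixes P :: "complex poly"
  assumes "degree P \<ge> 2" "0 < \<kappa>"
  shows "\<exists>R. \<forall>z. R \<le> norm z \<longrightarrow> vcone (1 / \<kappa>) z \<longrightarrow>
           vcone \<kappa> (henon P d z) \<and> norm z * sqrt (norm z) \<le> norm (henon P d z)"
proof -
  have "0 \<le> 1 / \<kappa>"
    using assms(2) by simp
  from henon_snd_quadratic[OF assms(1) this, of d] obtain k R where k: "k > 0"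
    and kR: "\<And>z. R \<le> norm z \<Longrightarrow> vcone (1 / \<kappa>) z \<Longrightarrow> k * (norm z)\<^sup>2 \<le> cmod (snd (henon P d z))"
    by blast
  have "\<forall>\<^sub>F s in at_top. s \<le> \<kappa> * (k * s\<^sup>2) \<and> s * sqrt s \<le> k * s\<^sup>2"
    using k assms(2) by (intro eventually_conj) real_asymp+
  then obtain s where s: "\<And>s'. s \<le> s' \<Longrightarrow> s' \<le> \<kappa> * (k * s'\<^sup>2) \<and> s' * sqrt s' \<le> k * s'\<^sup>2"
    by (auto simp: eventually_at_top_linorder)
  have "vcone \<kappa> (henon P d z) \<and> norm z * sqrt (norm z) \<le> norm (henon P d z)"
    if "max R s \<le> norm z" "vcone (1 / \<kappa>) z" for z
  proof -
    have W: "k * (norm z)\<^sup>2 \<le> cmod (snd (henon P d z))"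
      using kR that by simp
    have "cmod (fst (henon P d z)) \<le> norm z"
      by (cases z) (simp add: henon_def norm_snd_le)
    also have "\<dots> \<le> \<kappa> * (k * (norm z)\<^sup>2)"
      using s that(1) by simp
    also have "\<dots> \<le> \<kappa> * cmod (snd (henon P d z))"
      using W assms(2) by simp
    finally have "vcone \<kappa> (henon P d z)"
      by (simp add: vcone_def)
    moreover have "cmod (snd (henon P d z)) \<le> norm (henon P d z)"
      by (cases "henon P d z") (simp add: norm_snd_le)
    ultimately show ?thesis
      using s[of "norm z"] that(1) W by auto
  qed
  then show ?thesis
    by blast
qed

lemma henon_inv_maps_hcone:
  fixes P :: "complex poly"
  assumes "degree P \<ge> 2" "d \<noteq> 0" "0 < \<kappa>"
  shows "\<exists>R. \<forall>z. R \<le> norm z \<longrightarrow> hcone (1 / \<kappa>) z \<longrightarrow>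
           hcone \<kappa> (henon_inv P d z) \<and> norm z * sqrt (norm z) \<le> norm (henon_inv P d z)"
proof -
  have "degree (smult (inverse d) P) \<ge> 2"
    using assms(1,2) by simp
  from henon_maps_vcone[OF this assms(3), of "inverse d"] obtain R where R:
    "\<And>z. R \<le> norm z \<Longrightarrow> vcone (1 / \<kappa>) z \<Longrightarrow>
       vcone \<kappa> (henon (smult (inverse d) P) (inverse d) z) \<and>
       norm z * sqrt (norm z) \<le> norm (henon (smult (inverse d) P) (inverse d) z)"
    by blast
  show ?thesis
  proof (intro exI[of _ R] allI impI)
    fix z
    assume "R \<le> norm z" "hcone (1 / \<kappa>) z"
    then have "R \<le> norm (prod.swap z)" "vcone (1 / \<kappa>) (prod.swap z)"
      by (simp_all add: hcone_iff_vcone_swap)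
    from R[OF this] show "hcone \<kappa> (henon_inv P d z) \<and> norm z * sqrt (norm z) \<le> norm (henon_inv P d z)"
      by (simp add: henon_inv_conv_swap hcone_iff_vcone_swap)
  qed
qed

lemma gen_maps_letter_cone:
  fixes P :: "complex poly"
  assumes "degree P \<ge> 2" "d \<noteq> 0" "0 < \<kappa>"
  shows "\<exists>R\<ge>1. \<forall>j z. R \<le> norm z \<longrightarrow> letter_cone t j (1 / \<kappa>) z \<longrightarrow>
           letter_cone t j \<kappa> (gen P d t j z) \<and> norm z * sqrt (norm z) \<le> norm (gen P d t j z)"
proof -
  obtain R1 where R1: "\<And>z. R1 \<le> norm z \<Longrightarrow> vcone (1 / \<kappa>) z \<Longrightarrow>
      vcone \<kappa> (henon P d z) \<and> norm z * sqrt (norm z) \<le> norm (henon P d z)"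
    using henon_maps_vcone[OF assms(1,3)] by blast
  obtain R2 where R2: "\<And>z. R2 \<le> norm z \<Longrightarrow> hcone (1 / \<kappa>) z \<Longrightarrow>
      hcone \<kappa> (henon_inv P d z) \<and> norm z * sqrt (norm z) \<le> norm (henon_inv P d z)"
    using henon_inv_maps_hcone[OF assms] by blast
  have "letter_cone t j \<kappa> (gen P d t j z) \<and> norm z * sqrt (norm z) \<le> norm (gen P d t j z)"
    if "max 1 (max R1 R2) \<le> norm z" "letter_cone t j (1 / \<kappa>) z" for j z
    using that R1[of z] R2[of z] R1[of "rot t z"] R2[of "rot t z"]
    by (auto simp: letter_cone_def gen_def)
  then show ?thesis
    by (intro exI[of _ "max 1 (max R1 R2)"]) auto
qed

lemma poly_norm_le: "\<exists>B\<ge>0. \<forall>y. cmod (poly P y) \<le> B * max 1 (cmod y) ^ degree P"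
proof (intro exI[of _ "\<Sum>k\<le>degree P. cmod (coeff P k)"] conjI allI)
  fix y :: complex
  have "cmod (poly P y) \<le> (\<Sum>k\<le>degree P. cmod (coeff P k * y ^ k))"
    unfolding poly_altdef by (rule norm_sum)
  also have "\<dots> \<le> (\<Sum>k\<le>degree P. cmod (coeff P k) * max 1 (cmod y) ^ degree P)"
  proof (intro sum_mono)
    fix k
    assume "k \<in> {..degree P}"
    then have "cmod y ^ k \<le> max 1 (cmod y) ^ degree P"
      by (meson atMost_iff max.cobounded1 max.cobounded2 norm_ge_zero order_trans
          power_increasing power_mono)
    then show "cmod (coeff P k * y ^ k) \<le> cmod (coeff P k) * max 1 (cmod y) ^ degree P"
      by (simp add: norm_mult norm_power mult_left_mono)
  qed
  finally show "cmod (poly P y) \<le> (\<Sum>k\<le>degree P. cmod (coeff P k)) * max 1 (cmod y) ^ degree P"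
    by (simp add: sum_distrib_right)
qed (simp add: sum_nonneg)

lemma henon_norm_le:
  assumes "degree P \<ge> 1"
  shows "\<exists>C. \<forall>z. norm (henon P d z) \<le> C * max 1 (norm z) ^ degree P"
proof -
  obtain B where B: "B \<ge> 0" "\<And>y. cmod (poly P y) \<le> B * max 1 (cmod y) ^ degree P"
    using poly_norm_le by blast
  show ?thesis
  proof (intro exI[of _ "1 + B + cmod d"] allI)
    fix z :: "complex \<times> complex"
    obtain x y where z: "z = (x, y)" by (cases z)
    define M where "M = max 1 (norm z) ^ degree P"
    have "max 1 (norm z) \<le> M"
      unfolding M_def using assms by (intro self_le_power) auto
    then have xM: "cmod x \<le> M" and yM: "cmod y \<le> M"
      using norm_fst_le[of x y] norm_snd_le[of y x] by (simp_all add: z)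
    have "max 1 (cmod y) ^ degree P \<le> M"
      unfolding M_def using norm_snd_le[of y x] by (intro power_mono) (auto simp: z)
    then have PM: "cmod (poly P y) \<le> B * M"
      using B by (meson mult_left_mono order_trans)
    have "norm (henon P d z) \<le> cmod y + cmod (poly P y - d * x)"
      using norm_Pair_le by (simp add: henon_def z)
    also have "\<dots> \<le> cmod y + cmod (poly P y) + cmod d * cmod x"
      using norm_triangle_ineq4[of "poly P y" "d * x"] by (simp add: norm_mult)
    also have "\<dots> \<le> (1 + B + cmod d) * M"
      using xM yM PM mult_left_mono[OF xM, of "cmod d"] by (simp add: algebra_simps)
    finally show "norm (henon P d z) \<le> (1 + B + cmod d) * max 1 (norm z) ^ degree P"
      by (simp add: M_def)
  qed
qed

lemma gen_norm_le:
  assumes "degree P \<ge> 1" "d \<noteq> 0"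
  shows "\<exists>C. \<forall>j z. norm (gen P d t j z) \<le> C * max 1 (norm z) ^ degree P"
proof -
  obtain C1 where C1: "\<And>z. norm (henon P d z) \<le> C1 * max 1 (norm z) ^ degree P"
    using henon_norm_le[OF assms(1)] by blast
  have "degree (smult (inverse d) P) = degree P"
    using assms(2) by simp
  then obtain C2 where C2': "\<And>z. norm (henon (smult (inverse d) P) (inverse d) z) \<le> C2 * max 1 (norm z) ^ degree P"
    using henon_norm_le[of "smult (inverse d) P" "inverse d"] assms(1) by auto
  then have C2: "norm (henon_inv P d z) \<le> C2 * max 1 (norm z) ^ degree P" for z
    using C2'[of "prod.swap z"] by (simp add: henon_inv_conv_swap)
  have H: "norm (henon P d z) \<le> max C1 C2 * max 1 (norm z) ^ degree P"
           "norm (henon_inv P d z) \<le> max C1 C2 * max 1 (norm z) ^ degree P" for z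
  proof -
    have "C1 * max 1 (norm z) ^ degree P \<le> max C1 C2 * max 1 (norm z) ^ degree P"
         "C2 * max 1 (norm z) ^ degree P \<le> max C1 C2 * max 1 (norm z) ^ degree P"
      by (simp_all add: mult_right_mono)
    then show "norm (henon P d z) \<le> max C1 C2 * max 1 (norm z) ^ degree P"
              "norm (henon_inv P d z) \<le> max C1 C2 * max 1 (norm z) ^ degree P"
      using C1[of z] C2[of z] by linarith+
  qed
  have "norm (gen P d t j z) \<le> max C1 C2 * max 1 (norm z) ^ degree P" for j z
    using H[of z] H[of "rot t z"] by (simp add: gen_def)
  then show ?thesis
    by blast
qed

lemma max_norm_le_power:
  fixes y z :: "'a::real_normed_vector"
  assumes "norm y \<le> C * max 1 (norm z) ^ n" "C \<le> K" "1 \<le> K"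
  shows "max (norm y) K \<le> max (norm z) K ^ Suc n"
proof -
  define M where "M = max (norm z) K"
  have M: "1 \<le> M" "K \<le> M" "max 1 (norm z) \<le> M"
    using assms(3) by (auto simp: M_def)
  have "C * max 1 (norm z) ^ n \<le> K * max 1 (norm z) ^ n"
    using assms(2) by (rule mult_right_mono) simp
  then have "norm y \<le> K * max 1 (norm z) ^ n"
    using assms(1) by linarith
  also have "\<dots> \<le> K * M ^ n"
    using M assms(3) by (intro mult_left_mono power_mono) auto
  also have "\<dots> \<le> M ^ Suc n"
    using M by (simp add: mult_right_mono)
  finally show ?thesis
    using M self_le_power[of M "Suc n"] by (simp add: M_def)
qed

lemma word_eval_norm_le:
  assumes "1 \<le> K" "\<And>i z. max (norm (gen P d t i z)) K \<le> max (norm z) K ^ D"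
  shows "max (norm (word_eval P d t u z)) K \<le> max (norm z) K ^ (D ^ length u)"
proof (induction u)
  case (Cons i u)
  have "max (norm (word_eval P d t (i # u) z)) K \<le> max (norm (word_eval P d t u z)) K ^ D"
    using assms(2) by simp
  also have "\<dots> \<le> (max (norm z) K ^ (D ^ length u)) ^ D"
    using Cons.IH assms(1) by (intro power_mono) auto
  finally show ?case
    by (simp add: power_mult[symmetric] mult.commute)
qed simp

lemma word_eval_norm_le_power:
  assumes "degree P \<ge> 1" "d \<noteq> 0"
  shows "\<exists>K\<ge>2. \<forall>u z. K \<le> norm z \<longrightarrow> norm (word_eval P d t u z) \<le> norm z ^ (Suc (degree P) ^ length u)"
proof -
  obtain C where C: "\<And>j z. norm (gen P d t j z) \<le> C * max 1 (norm z) ^ degree P"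
    using gen_norm_le[OF assms] by blast
  have "max (norm (gen P d t j z)) (max 2 C) \<le> max (norm z) (max 2 C) ^ Suc (degree P)" for j z
    by (rule max_norm_le_power[OF C]) simp_all
  then have "norm (word_eval P d t u z) \<le> norm z ^ (Suc (degree P) ^ length u)" if "max 2 C \<le> norm z" for u z
    using word_eval_norm_le[of "max 2 C" P d t "Suc (degree P)" u z] that by (simp add: max_absorb1)
  then show ?thesis
    by (intro exI[of _ "max 2 C"]) auto
qed

section \<open>Ping-pong\<close>

lemma ln_three_halves_le:
  assumes "1 \<le> a" "a * sqrt a \<le> b"
  shows "3 / 2 * ln a \<le> ln b"
proof -
  have "3 / 2 * ln a = ln (a * sqrt a)"
    using assms(1) by (simp add: ln_mult ln_sqrt)
  also have "\<dots> \<le> ln b"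
    using assms by (subst ln_le_cancel_iff) (auto intro: less_le_trans[of 0 "a * sqrt a"])
  finally show ?thesis .
qed

lemma ping_pong_growth:
  fixes D T :: "nat \<Rightarrow> complex \<times> complex \<Rightarrow> bool"
  assumes "1 \<le> R"
    and maps: "\<And>j z. R \<le> norm z \<Longrightarrow> D j z \<Longrightarrow> T j (gen P d t j z) \<and> norm z * sqrt (norm z) \<le> norm (gen P d t j z)"
    and contain: "\<And>j k z. j < 4 \<Longrightarrow> k < 4 \<Longrightarrow> j \<noteq> inv_letter k \<Longrightarrow> z \<noteq> 0 \<Longrightarrow> T k z \<Longrightarrow> D j z"
    and "R \<le> norm p" "\<And>j. D j p"
    and "reduced w"
  shows "(3 / 2) ^ length w * ln (norm p) \<le> ln (norm (word_eval P d t w p))"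
proof -
  let ?ev = "\<lambda>w. word_eval P d t w p"
  have "R \<le> norm (?ev w) \<and> (3 / 2) ^ length w * ln (norm p) \<le> ln (norm (?ev w))
        \<and> (w \<noteq> [] \<longrightarrow> T (hd w) (?ev w))"
    using \<open>reduced w\<close>
  proof (induction w)
    case Nil
    then show ?case
      using \<open>R \<le> norm p\<close> by simp
  next
    case (Cons j r)
    let ?z = "?ev r"
    have IH: "R \<le> norm ?z" "(3 / 2) ^ length r * ln (norm p) \<le> ln (norm ?z)"
        "r \<noteq> [] \<longrightarrow> T (hd r) ?z"
      using Cons reduced_ConsD by blast+
    have "D j ?z"
    proof (cases r)
      case Nil
      then show ?thesis
        using \<open>\<And>j. D j p\<close> by simp
    next
      case (Cons k r')
      then have "j < 4" "k < 4" "j \<noteq> inv_letter k"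
        using \<open>reduced (j # r)\<close> reduced_ConsD[of k r'] by auto
      moreover have "?z \<noteq> 0"
        using IH(1) \<open>1 \<le> R\<close> by auto
      ultimately show ?thesis
        using contain IH(3) Cons by auto
    qed
    with maps IH(1) have T: "T j (gen P d t j ?z)" and grow: "norm ?z * sqrt (norm ?z) \<le> norm (gen P d t j ?z)"
      by blast+
    have z1: "1 \<le> norm ?z"
      using IH(1) \<open>1 \<le> R\<close> by linarith
    then have "norm ?z \<le> norm ?z * sqrt (norm ?z)"
      by (simp add: mult_le_cancel_left1)
    then have "R \<le> norm (gen P d t j ?z)"
      using IH(1) grow by linarith
    moreover have "(3 / 2) ^ length (j # r) * ln (norm p) \<le> ln (norm (gen P d t j ?z))"
      using IH(2) ln_three_halves_le[OF z1 grow] by simp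
    ultimately show ?case
      using T by simp
  qed
  then show ?thesis by simp
qed

lemma reduced_word_log_growth:
  fixes P :: "complex poly" and r :: real
  assumes "degree P \<ge> 2" "d \<noteq> 0" "cos t \<noteq> 0" "sin t \<noteq> 0"
  obtains p where "r \<le> norm p"
    and "\<And>w. reduced w \<Longrightarrow> (3 / 2) ^ length w * ln (norm p) \<le> ln (norm (word_eval P d t w p))"
proof -
  obtain \<kappa> where \<kappa>: "cone_slope \<kappa> t"
    using exists_cone_slope[OF assms(3,4)] by blast
  obtain R where R: "1 \<le> R" and maps: "\<And>j z. R \<le> norm z \<Longrightarrow> letter_cone t j (1 / \<kappa>) z \<Longrightarrow>
      letter_cone t j \<kappa> (gen P d t j z) \<and> norm z * sqrt (norm z) \<le> norm (gen P d t j z)"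
    using gen_maps_letter_cone[OF assms(1,2) cone_slope_pos[OF \<kappa>]] by blast
  obtain p where p: "max R r \<le> norm p" "\<And>j. letter_cone t j (1 / \<kappa>) p"
    using exists_point_in_wide_letter_cones cone_slope_pos[OF \<kappa>] cone_slope_lt_1[OF \<kappa>] by fastforce
  show ?thesis
  proof (rule that)
    show "r \<le> norm p"
      using p(1) by simp
    show "(3 / 2) ^ length w * ln (norm p) \<le> ln (norm (word_eval P d t w p))" if "reduced w" for w
      using ping_pong_growth[where D = "\<lambda>j. letter_cone t j (1 / \<kappa>)" and T = "\<lambda>j. letter_cone t j \<kappa>",
          OF R maps letter_cone_containment[OF \<kappa>] _ p(2) that] p(1) by simp
  qed
qed

lemma gen_inj_on:
  fixes P :: "complex poly"
  assumes "degree P \<ge> 2" "d \<noteq> 0" "cos t \<noteq> 0" "sin t \<noteq> 0"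
  shows "inj_on (gen P d t) {..<4}"
proof (rule inj_onI)
  fix i j
  assume ij: "i \<in> {..<4}" "j \<in> {..<4}" and eq: "gen P d t i = gen P d t j"
  obtain p where p: "2 \<le> norm p"
    and growth: "\<And>w. reduced w \<Longrightarrow> (3 / 2) ^ length w * ln (norm p) \<le> ln (norm (word_eval P d t w p))"
    by (rule reduced_word_log_growth[OF assms, where r = 2]) blast
  show "i = j"
  proof (rule ccontr)
    assume "i \<noteq> j"
    then have "reduced [inv_letter j, i]"
      using ij by (auto simp: inv_letter_def)
    moreover have "word_eval P d t [inv_letter j, i] p = p"
      using eq gen_inv_letter_gen[OF assms(2), of j] ij by simp
    ultimately have "(3 / 2) ^ length [inv_letter j, i] * ln (norm p) \<le> ln (norm p)"
      using growth by metis
    moreover have "0 < ln (norm p)"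
      using p by (intro ln_gt_zero) simp
    ultimately show False
      by simp
  qed
qed

lemma reduced_word_distortion:
  fixes P :: "complex poly"
  assumes "degree P \<ge> 2" "d \<noteq> 0" "cos t \<noteq> 0" "sin t \<noteq> 0"
  shows "\<exists>c>0. \<forall>w u. reduced w \<longrightarrow> word_eval P d t u = word_eval P d t w \<longrightarrow>
           c * real (length w) \<le> real (length u)"
proof -
  define D where "D = Suc (degree P)"
  obtain K where K: "2 \<le> K"
    and upper: "\<And>u z. K \<le> norm z \<Longrightarrow> norm (word_eval P d t u z) \<le> norm z ^ (D ^ length u)"
    using word_eval_norm_le_power[of P d t] assms(1,2) unfolding D_def by auto
  obtain p where p: "K \<le> norm p"
    and growth: "\<And>w. reduced w \<Longrightarrow> (3 / 2) ^ length w * ln (norm p) \<le> ln (norm (word_eval P d t w p))"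
    by (rule reduced_word_log_growth[OF assms, where r = K]) blast
  have p1: "1 < norm p"
    using p K by simp
  then have lnp: "ln (norm p) > 0"
    by (rule ln_gt_zero)
  have lnD: "ln (real D) > 0"
    using assms(1) by (simp add: D_def)
  show ?thesis
  proof (intro exI[of _ "ln (3 / 2) / ln (real D)"] conjI allI impI)
    fix w u
    assume "reduced w" and eq: "word_eval P d t u = word_eval P d t w"
    have growth_w: "(3 / 2) ^ length w * ln (norm p) \<le> ln (norm (word_eval P d t w p))"
      using growth \<open>reduced w\<close> by blast
    also have "\<dots> \<le> ln (norm p ^ (D ^ length u))"
    proof -
      have "norm (word_eval P d t w p) \<le> norm p ^ (D ^ length u)"
        using upper[OF p, of u] eq by simp
      moreover have "0 < norm (word_eval P d t w p)"
      proof (rule ccontr)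
        assume "\<not> 0 < norm (word_eval P d t w p)"
        moreover have "0 < (3 / 2) ^ length w * ln (norm p)"
          using lnp by simp
        ultimately show False
          using growth_w by simp
      qed
      ultimately show ?thesis
        using p1 by (subst ln_le_cancel_iff) (auto intro!: zero_less_power)
    qed
    also have "\<dots> = real D ^ length u * ln (norm p)"
      by (simp add: ln_realpow)
    finally have "(3 / 2) ^ length w \<le> real D ^ length u"
      using lnp by simp
    then have "ln ((3 / 2) ^ length w) \<le> ln (real D ^ length u)"
      by (subst ln_le_cancel_iff) (auto simp: D_def)
    then have "real (length w) * ln (3 / 2) \<le> real (length u) * ln (real D)"
      by (simp add: ln_realpow D_def)
    then show "ln (3 / 2) / ln (real D) * real (length w) \<le> real (length u)"
      using lnD by (metis mult.commute pos_divide_le_eq times_divide_eq_left)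
  qed (use lnD in \<open>simp add: divide_pos_pos\<close>)
qed

lemma word_length_reduced_ge:
  fixes P :: "complex poly"
  assumes "degree P \<ge> 2" "d \<noteq> 0" "cos t \<noteq> 0" "sin t \<noteq> 0"
  shows "\<exists>c>0. \<forall>w. reduced w \<longrightarrow> c * real (length w) \<le> real (word_length P d t (word_eval P d t w))"
proof -
  obtain c where c: "c > 0" and distortion: "\<And>w u. reduced w \<Longrightarrow> word_eval P d t u = word_eval P d t w \<Longrightarrow>
      c * real (length w) \<le> real (length u)"
    using reduced_word_distortion[OF assms] by blast
  have "c * real (length w) \<le> real (word_length P d t (word_eval P d t w))" if "reduced w" for w
  proof -
    have "\<exists>u. length u = word_length P d t (word_eval P d t w) \<and> set u \<subseteq> {0..3}
        \<and> word_eval P d t u = word_eval P d t w"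
      unfolding word_length_def by (rule LeastI_ex) (use reduced_letters[OF that] in blast)
    then obtain u where u: "length u = word_length P d t (word_eval P d t w)"
        "word_eval P d t u = word_eval P d t w"
      by blast
    show ?thesis
      using distortion[OF that u(2)] u(1) by simp
  qed
  then show ?thesis
    using c by blast
qed

section \<open>Linear escape of the reduced random walk\<close>

fun reduced_walk :: "('g \<Rightarrow> nat) \<Rightarrow> nat list \<Rightarrow> (nat \<Rightarrow> 'g) \<Rightarrow> nat \<Rightarrow> nat list" where
  "reduced_walk lo w \<omega> 0 = w"
| "reduced_walk lo w \<omega> (Suc n) = push_letter (reduced_walk lo w \<omega> n) (lo (\<omega> n))"

lemma reduced_walk_case_nat:
  "reduced_walk lo w (case_nat g \<omega>) (Suc n) = reduced_walk lo (push_letter w (lo g)) \<omega> n"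
  by (induction n) auto

lemma reduced_walk_letters:
  "set w \<subseteq> {..<4} \<Longrightarrow> (\<And>g. lo g < 4) \<Longrightarrow> set (reduced_walk lo w \<omega> n) \<subseteq> {..<4}"
  by (induction n) (simp_all add: push_letter_letters)

lemma measurable_reduced_walk:
  "(\<lambda>\<omega>. reduced_walk lo w \<omega> n) \<in> PiM UNIV (\<lambda>_::nat. measure_pmf N) \<rightarrow>\<^sub>M count_space UNIV"
proof (induction n)
  case (Suc n)
  have "(\<lambda>\<omega>. push_letter v (lo (\<omega> n))) \<in> PiM UNIV (\<lambda>_::nat. measure_pmf N) \<rightarrow>\<^sub>M count_space UNIV"
    for v
    by (rule measurable_PiM_component_rev[where f = "\<lambda>x. push_letter v (lo x)"]) auto
  then show ?case
    using measurable_compose_countable[where f = "\<lambda>v \<omega>. push_letter v (lo (\<omega> n))", OF _ Suc]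
    by simp
qed simp

lemma two_ratios_le:
  fixes x y \<tau> :: real
  assumes "0 < \<tau>" "2 * \<tau> \<le> x" "2 * \<tau> \<le> y"
  shows "x * (y / (y + \<tau>)) + y * (x / (x + \<tau>)) \<le> x + y - 4 / 3 * \<tau>"
proof -
  have "x / y + y / x - 2 = (x - y)\<^sup>2 / (x * y)"
    using assms by (simp add: field_simps power2_eq_square)
  moreover have "(x - y)\<^sup>2 / (x * y) \<ge> 0"
    using assms by simp
  moreover have "2 * x / (3 * y) \<le> x / (y + \<tau>)" "2 * y / (3 * x) \<le> y / (x + \<tau>)"
    using assms by (simp_all add: field_simps)
  moreover have "2 * x / (3 * y) + 2 * y / (3 * x) = 2 / 3 * (x / y + y / x)"
    by (simp add: field_simps)
  ultimately have "4 / 3 \<le> x / (y + \<tau>) + y / (x + \<tau>)"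
    by linarith
  then have "\<tau> * (4 / 3) \<le> \<tau> * (x / (y + \<tau>) + y / (x + \<tau>))"
    using assms(1) by (intro mult_left_mono) auto
  then have "4 / 3 * \<tau> \<le> \<tau> * (x / (y + \<tau>)) + \<tau> * (y / (x + \<tau>))"
    by (simp only: distrib_left mult.commute)
  moreover have "x * (y / (y + \<tau>)) = x - \<tau> * (x / (y + \<tau>))" "y * (x / (x + \<tau>)) = y - \<tau> * (y / (x + \<tau>))"
    using assms by (simp_all add: field_simps)
  ultimately show ?thesis
    by linarith
qed

lemma sum_lessThan_4:
  fixes f :: "nat \<Rightarrow> 'a::comm_monoid_add"
  shows "(\<Sum>j<4. f j) = f 0 + f 1 + f 2 + f 3"
  by (simp add: eval_nat_numeral add.assoc)

locale letter_weights =
  fixes A :: "nat \<Rightarrow> real"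
  assumes weight_pos: "\<And>i. i < 4 \<Longrightarrow> 0 < A i"
    and weight_sum: "A 0 + A 1 + A 2 + A 3 = 1"
begin

definition tau :: real where
  "tau = min (min (A 0) (A 1)) (min (A 2) (A 3)) / 2"

definition beta :: "nat \<Rightarrow> real" where
  "beta j = A (inv_letter j) / (A (inv_letter j) + tau)"

definition potential :: "nat list \<Rightarrow> real" where
  "potential w = prod_list (map beta w)"

definition rho :: real where
  "rho = 1 - tau / 3"

definition beta_min :: real where
  "beta_min = Min (beta ` {..<4})"

lemma tau_pos: "0 < tau"
  using weight_pos[of 0] weight_pos[of 1] weight_pos[of 2] weight_pos[of 3] by (simp add: tau_def)

lemma tau_le: "i < 4 \<Longrightarrow> 2 * tau \<le> A i"
  by (auto simp: tau_def less_Suc_eq numeral_eq_Suc)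

lemma weight_inv_letter_pos: "0 < A (inv_letter j)"
  using weight_pos[OF inv_letter_lt4] .

lemma beta_pos: "0 < beta j"
  using weight_inv_letter_pos[of j] tau_pos by (simp add: beta_def)

lemma beta_lt1: "beta j < 1"
  using weight_inv_letter_pos[of j] tau_pos by (simp add: beta_def)

lemma weight_inv_letter_eq: "A (inv_letter j) = beta j * (A (inv_letter j) + tau)"
  using weight_inv_letter_pos[of j] tau_pos by (simp add: beta_def)

lemma weighted_beta_le: "i < 4 \<Longrightarrow> A i * beta i \<le> A i"
  using beta_lt1[of i] weight_pos[of i] by (simp add: mult_left_le)

lemma pair_bound:
  assumes "j < 4"
  shows "A j * beta j + A (inv_letter j) * beta (inv_letter j) \<le> A j + A (inv_letter j) - 4 / 3 * tau"
  using two_ratios_le[OF tau_pos tau_le[OF assms] tau_le[OF inv_letter_lt4]] assms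
  by (simp add: beta_def inv_letter_inv_letter)

lemma potential_pos: "0 < potential w"
  by (induction w) (simp_all add: potential_def beta_pos)

lemma potential_nonneg: "0 \<le> potential w"
  using potential_pos less_imp_le by blast

lemma potential_Cons [simp]: "potential (a # w) = beta a * potential w"
  by (simp add: potential_def)

lemma rho_pos: "0 < rho" and rho_lt1: "rho < 1"
  using tau_pos tau_le[of 0] weight_sum weight_pos[of 1] weight_pos[of 2] weight_pos[of 3]
  by (simp_all add: rho_def)

lemma beta_min_le: "j < 4 \<Longrightarrow> beta_min \<le> beta j"
  by (simp add: beta_min_def)

lemma beta_min_pos: "0 < beta_min" and beta_min_lt1: "beta_min < 1"
proof -
  have "beta_min \<in> beta ` {..<4}"
    unfolding beta_min_def by (rule Min_in) (auto simp: lessThan_empty_iff)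
  then show "0 < beta_min" "beta_min < 1"
    using beta_pos beta_lt1 by auto
qed

lemma potential_ge: "set w \<subseteq> {..<4} \<Longrightarrow> beta_min ^ length w \<le> potential w"
proof (induction w)
  case (Cons a w)
  then show ?case
    using beta_min_le[of a] beta_min_pos by (simp add: mult_mono)
qed (simp add: potential_def)

lemma powr_le_potential:
  assumes "set w \<subseteq> {..<4}" "real (length w) \<le> x"
  shows "beta_min powr x \<le> potential w"
proof -
  have "beta_min powr x \<le> beta_min powr real (length w)"
    using assms(2) beta_min_pos beta_min_lt1 by (intro powr_mono') auto
  also have "\<dots> = beta_min ^ length w"
    using beta_min_pos by (rule powr_realpow)
  also have "\<dots> \<le> potential w"
    using assms(1) by (rule potential_ge)
  finally show ?thesis .
qed

lemma drift_Nil: "(\<Sum>j<4. A j * potential (push_letter [] j)) \<le> rho * potential []"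
  using pair_bound[of 0] pair_bound[of 1] weight_sum tau_pos
  by (simp add: push_letter_def potential_def rho_def sum_lessThan_4 inv_letter_def)

lemma drift_Cons:
  assumes "a < 4"
  shows "(\<Sum>j<4. A j * potential (push_letter (a # r) j)) \<le> rho * potential (a # r)"
proof -
  let ?a' = "inv_letter a" and ?V = "potential (a # r)"
  have "(\<Sum>j\<in>{..<4} - {?a'}. A j * beta j) = (\<Sum>j<4. A j * beta j) - A ?a' * beta ?a'"
    using sum.remove[of "{..<4}" ?a' "\<lambda>j. A j * beta j"] inv_letter_lt4 by simp
  also have "\<dots> \<le> 1 - A ?a' - 4 / 3 * tau"
  proof -
    have "a = 0 \<or> a = 1 \<or> a = 2 \<or> a = 3"
      using assms by auto
    then show ?thesis
      using pair_bound[of 0] pair_bound[of 1] weighted_beta_le[of a] weight_sum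
      by (elim disjE) (simp_all add: sum_lessThan_4 inv_letter_def)
  qed
  finally have rest: "(\<Sum>j\<in>{..<4} - {?a'}. A j * beta j) \<le> 1 - A ?a' - 4 / 3 * tau" .
  have "(\<Sum>j<4. A j * potential (push_letter (a # r) j))
      = A ?a' * potential (push_letter (a # r) ?a')
        + (\<Sum>j\<in>{..<4} - {?a'}. A j * potential (push_letter (a # r) j))"
    by (rule sum.remove) (simp_all add: inv_letter_lt4)
  also have "potential (push_letter (a # r) ?a') = potential r"
    using assms by (simp add: push_letter_Cons inv_letter_lt4)
  also have "(\<Sum>j\<in>{..<4} - {?a'}. A j * potential (push_letter (a # r) j))
      = (\<Sum>j\<in>{..<4} - {?a'}. A j * beta j * ?V)"
    using assms by (intro sum.cong) (auto simp: push_letter_Cons)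
  also have "\<dots> = (\<Sum>j\<in>{..<4} - {?a'}. A j * beta j) * ?V"
    by (simp add: sum_distrib_right)
  also have "A ?a' * potential r = (A ?a' + tau) * ?V"
    by (subst weight_inv_letter_eq[of a]) (simp add: mult_ac)
  finally have "(\<Sum>j<4. A j * potential (push_letter (a # r) j))
      = (A ?a' + tau + (\<Sum>j\<in>{..<4} - {?a'}. A j * beta j)) * ?V"
    by (simp add: algebra_simps)
  also have "\<dots> \<le> rho * ?V"
    using rest potential_pos[of "a # r"] by (intro mult_right_mono) (simp_all add: rho_def)
  finally show ?thesis .
qed

lemma drift: "set w \<subseteq> {..<4} \<Longrightarrow> (\<Sum>j<4. A j * potential (push_letter w j)) \<le> rho * potential w"
  using drift_Nil drift_Cons by (cases w) auto

end

locale letter_walk = letter_weights A for A :: "nat \<Rightarrow> real" +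
  fixes N :: "'g pmf" and lo :: "'g \<Rightarrow> nat"
  assumes letter_lt4: "\<And>g. lo g < 4"
    and letter_law: "\<And>f. (\<integral>\<^sup>+g. f (lo g) \<partial>measure_pmf N) = (\<Sum>j<4. ennreal (A j) * f j)"
begin

sublocale sequence_space "measure_pmf N"
  unfolding sequence_space_def by (rule product_prob_spaceI) (rule prob_space_measure_pmf)

lemma nn_integral_reduced_walk_Suc:
  fixes f :: "nat list \<Rightarrow> ennreal"
  shows "(\<integral>\<^sup>+\<omega>. f (reduced_walk lo w \<omega> (Suc n)) \<partial>S)
       = (\<integral>\<^sup>+s. \<integral>\<^sup>+\<omega>. f (reduced_walk lo (push_letter w (lo s)) \<omega> n) \<partial>S \<partial>measure_pmf N)"
proof -
  let ?cons = "\<lambda>(s, \<omega>). case_nat s \<omega>"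
  have cons: "?cons \<in> measure_pmf N \<Otimes>\<^sub>M S \<rightarrow>\<^sub>M S"
    by measurable
  have f: "(\<lambda>\<omega>. f (reduced_walk lo w \<omega> (Suc n))) \<in> borel_measurable S"
    using measurable_reduced_walk by (rule measurable_compose) simp
  have "(\<integral>\<^sup>+\<omega>. f (reduced_walk lo w \<omega> (Suc n)) \<partial>S)
      = (\<integral>\<^sup>+\<omega>. f (reduced_walk lo w \<omega> (Suc n)) \<partial>distr (measure_pmf N \<Otimes>\<^sub>M S) S ?cons)"
    by (simp add: PiM_iter)
  also have "\<dots> = (\<integral>\<^sup>+x. f (reduced_walk lo w (?cons x) (Suc n)) \<partial>(measure_pmf N \<Otimes>\<^sub>M S))"
    using f by (intro nn_integral_distr[OF cons]) simp
  also have "\<dots> = (\<integral>\<^sup>+s. \<integral>\<^sup>+\<omega>. f (reduced_walk lo w (case_nat s \<omega>) (Suc n)) \<partial>S \<partial>measure_pmf N)"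
    using measurable_comp[OF cons f] by (subst nn_integral_fst[symmetric]) (simp_all add: comp_def)
  finally show ?thesis
    by (simp only: reduced_walk_case_nat)
qed

lemma nn_integral_potential_walk:
  "set w \<subseteq> {..<4} \<Longrightarrow>
     (\<integral>\<^sup>+\<omega>. potential (reduced_walk lo w \<omega> n) \<partial>S) \<le> ennreal (rho ^ n * potential w)"
proof (induction n arbitrary: w)
  case 0
  then show ?case
    by (simp add: emeasure_space_1)
next
  case (Suc n)
  have rho: "0 \<le> rho"
    using rho_pos by simp
  have "(\<integral>\<^sup>+\<omega>. potential (reduced_walk lo w \<omega> (Suc n)) \<partial>S)
      = (\<integral>\<^sup>+s. \<integral>\<^sup>+\<omega>. potential (reduced_walk lo (push_letter w (lo s)) \<omega> n) \<partial>S \<partial>measure_pmf N)"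
    by (rule nn_integral_reduced_walk_Suc)
  also have "\<dots> \<le> (\<integral>\<^sup>+s. ennreal (rho ^ n * potential (push_letter w (lo s))) \<partial>measure_pmf N)"
    by (intro nn_integral_mono Suc.IH push_letter_letters Suc.prems letter_lt4)
  also have "\<dots> = (\<Sum>j<4. ennreal (A j) * ennreal (rho ^ n * potential (push_letter w j)))"
    by (rule letter_law)
  also have "\<dots> = (\<Sum>j<4. ennreal (A j * (rho ^ n * potential (push_letter w j))))"
    using rho by (intro sum.cong) (simp_all add: ennreal_mult less_imp_le[OF weight_pos] potential_nonneg)
  also have "\<dots> = ennreal (\<Sum>j<4. A j * (rho ^ n * potential (push_letter w j)))"
    using rho by (intro sum_ennreal) (simp add: less_imp_le[OF weight_pos] potential_nonneg)
  also have "\<dots> \<le> ennreal (rho ^ Suc n * potential w)"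
  proof (rule ennreal_leI)
    have "(\<Sum>j<4. A j * (rho ^ n * potential (push_letter w j)))
        = rho ^ n * (\<Sum>j<4. A j * potential (push_letter w j))"
      by (simp add: sum_distrib_left algebra_simps)
    also have "\<dots> \<le> rho ^ n * (rho * potential w)"
      using drift[OF Suc.prems] rho by (intro mult_left_mono) auto
    finally show "(\<Sum>j<4. A j * (rho ^ n * potential (push_letter w j))) \<le> rho ^ Suc n * potential w"
      by (simp add: algebra_simps)
  qed
  finally show ?case .
qed

lemma sets_reduced_walk: "{\<omega> \<in> space S. Q (reduced_walk lo w \<omega> n)} \<in> sets S"
  using measurable_sets[OF measurable_reduced_walk, of "{w. Q w}" lo w n N]
  by (simp add: vimage_def Int_def conj_commute)

lemma emeasure_short_walk_le:
  fixes \<epsilon> :: real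
  assumes "0 \<le> \<epsilon>"
  shows "emeasure S {\<omega> \<in> space S. real (length (reduced_walk lo [] \<omega> n)) \<le> \<epsilon> * n}
           \<le> ennreal ((rho / beta_min powr \<epsilon>) ^ n)"
proof -
  let ?B = "{\<omega> \<in> space S. real (length (reduced_walk lo [] \<omega> n)) \<le> \<epsilon> * n}"
  let ?c = "beta_min powr (\<epsilon> * n)"
  have c: "0 < ?c"
    using beta_min_pos by simp
  have B: "?B \<in> sets S"
    by (rule sets_reduced_walk)
  have short: "?c \<le> potential (reduced_walk lo [] \<omega> n)" if "\<omega> \<in> ?B" for \<omega>
    using that reduced_walk_letters[of "[]" lo] letter_lt4 by (intro powr_le_potential) auto
  have markov: "indicator ?B \<omega> \<le> ennreal (potential (reduced_walk lo [] \<omega> n)) * ennreal (1 / ?c)" for \<omega>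
  proof (cases "\<omega> \<in> ?B")
    case True
    then have "1 \<le> potential (reduced_walk lo [] \<omega> n) * (1 / ?c)"
      using short c by (simp add: field_simps)
    then show ?thesis
      using True c by (simp add: ennreal_mult[symmetric] potential_nonneg)
  qed simp
  have "emeasure S ?B = (\<integral>\<^sup>+\<omega>. indicator ?B \<omega> \<partial>S)"
    using B by simp
  also have "\<dots> \<le> (\<integral>\<^sup>+\<omega>. ennreal (potential (reduced_walk lo [] \<omega> n)) * ennreal (1 / ?c) \<partial>S)"
    using markov by (rule nn_integral_mono)
  also have "\<dots> = (\<integral>\<^sup>+\<omega>. potential (reduced_walk lo [] \<omega> n) \<partial>S) * ennreal (1 / ?c)"
    by (intro nn_integral_multc measurable_compose[OF measurable_reduced_walk]) simp
  also have "\<dots> \<le> ennreal (rho ^ n * potential []) * ennreal (1 / ?c)"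
    by (intro mult_right_mono nn_integral_potential_walk) auto
  also have "\<dots> = ennreal ((rho / beta_min powr \<epsilon>) ^ n)"
    using c less_imp_le[OF rho_pos]
    by (simp add: potential_def ennreal_mult[symmetric] power_divide powr_realpow
        powr_powr[symmetric] beta_min_pos)
  finally show ?thesis .
qed

lemma AE_linear_escape:
  "\<exists>\<epsilon>>0. AE \<omega> in S. \<forall>\<^sub>F n in sequentially. \<epsilon> * real n < real (length (reduced_walk lo [] \<omega> n))"
proof -
  define \<epsilon> where "\<epsilon> = ln rho / (2 * ln beta_min)"
  have "ln rho < 0" "ln beta_min < 0"
    using rho_pos rho_lt1 beta_min_pos beta_min_lt1 by simp_all
  then have \<epsilon>: "0 < \<epsilon>"
    by (simp add: \<epsilon>_def divide_neg_neg)
  \<comment> \<open>this choice of \<open>\<epsilon>\<close> turns the bound of \<open>emeasure_short_walk_le\<close> into \<open>sqrt rho ^ n\<close>\<close>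
  have "beta_min powr \<epsilon> = rho powr (1 / 2)"
    using \<open>ln beta_min < 0\<close> rho_pos beta_min_pos by (simp add: powr_def \<epsilon>_def)
  then have q: "rho / beta_min powr \<epsilon> = sqrt rho"
    using rho_pos by (simp add: powr_half_sqrt real_div_sqrt)
  define B where "B n = {\<omega> \<in> space S. real (length (reduced_walk lo [] \<omega> n)) \<le> \<epsilon> * n}" for n
  have B: "B n \<in> sets S" for n
    unfolding B_def by (rule sets_reduced_walk)
  have "norm (measure S (B n)) \<le> sqrt rho ^ n" for n
    using emeasure_short_walk_le[of \<epsilon> n] \<epsilon> rho_pos by (simp add: B_def q emeasure_eq_measure)
  moreover have "summable (\<lambda>n. sqrt rho ^ n)"
    using rho_pos rho_lt1 by (intro summable_geometric) simp
  ultimately have "summable (\<lambda>n. measure S (B n))"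
    by (blast intro: summable_comparison_test')
  then have "AE \<omega> in S. \<forall>\<^sub>F n in sequentially. \<omega> \<in> space S - B n"
    using B by (intro borel_cantelli_AE1) (simp_all add: emeasure_eq_measure)
  then have "AE \<omega> in S. \<forall>\<^sub>F n in sequentially. \<epsilon> * n < real (length (reduced_walk lo [] \<omega> n))"
    by (rule AE_mp) (auto simp: B_def elim!: eventually_mono)
  then show ?thesis
    using \<epsilon> by (intro exI[of _ \<epsilon>] conjI)
qed

end

definition letter_weight :: "real \<Rightarrow> real \<Rightarrow> real \<Rightarrow> real \<Rightarrow> nat \<Rightarrow> real" where
  "letter_weight a1 a2 a3 a4 i =
     (if i = 0 then a1 else if i = 1 then a2 else if i = 2 then a3 else if i = 3 then a4 else 0)"

(* The junk value 0 off the generators keeps every letter below 4. *)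
definition letter_of :: "complex poly \<Rightarrow> complex \<Rightarrow> real \<Rightarrow> cmap \<Rightarrow> nat" where
  "letter_of P d t g =
     (if g \<in> gen P d t ` {..<4} then the_inv_into {..<4} (gen P d t) g else 0)"

lemma nu_eq_map_pmf: "nu P d t a1 a2 a3 a4 = map_pmf (gen P d t) (embed_pmf (letter_weight a1 a2 a3 a4))"
  by (simp add: nu_def letter_weight_def[abs_def])

context
  fixes a1 a2 a3 a4 :: real
  assumes nonneg: "0 \<le> a1" "0 \<le> a2" "0 \<le> a3" "0 \<le> a4" and total: "a1 + a2 + a3 + a4 = 1"
begin

lemma letter_weight_nonneg: "0 \<le> letter_weight a1 a2 a3 a4 i"
  using nonneg by (simp add: letter_weight_def)

lemma nn_integral_letter_weight: "(\<integral>\<^sup>+i. letter_weight a1 a2 a3 a4 i \<partial>count_space UNIV) = 1"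
proof -
  have "(\<integral>\<^sup>+i. letter_weight a1 a2 a3 a4 i \<partial>count_space UNIV)
      = (\<integral>\<^sup>+i. letter_weight a1 a2 a3 a4 i \<partial>count_space {..<4})"
    by (subst nn_integral_count_space_indicator)
      (auto intro!: nn_integral_cong simp: letter_weight_def split: split_indicator)
  also have "\<dots> = ennreal (\<Sum>i<4. letter_weight a1 a2 a3 a4 i)"
    by (simp add: nn_integral_count_space_finite sum_ennreal letter_weight_nonneg)
  also have "\<dots> = 1"
    using total by (simp add: sum_lessThan_4 letter_weight_def)
  finally show ?thesis .
qed

lemma set_pmf_letter_weight: "set_pmf (embed_pmf (letter_weight a1 a2 a3 a4)) \<subseteq> {..<4}"
proof
  fix i
  assume "i \<in> set_pmf (embed_pmf (letter_weight a1 a2 a3 a4))"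
  then have "letter_weight a1 a2 a3 a4 i \<noteq> 0"
    using set_embed_pmf[OF letter_weight_nonneg nn_integral_letter_weight] by blast
  then show "i \<in> {..<4}"
    by (auto simp: letter_weight_def split: if_splits)
qed

lemma nn_integral_nu:
  assumes "\<And>i. i < 4 \<Longrightarrow> lo (gen P d t i) = i"
  shows "(\<integral>\<^sup>+g. f (lo g) \<partial>measure_pmf (nu P d t a1 a2 a3 a4))
           = (\<Sum>j<4. ennreal (letter_weight a1 a2 a3 a4 j) * f j)"
proof -
  have "(\<integral>\<^sup>+g. f (lo g) \<partial>measure_pmf (nu P d t a1 a2 a3 a4))
      = (\<Sum>i<4. f (lo (gen P d t i)) * pmf (embed_pmf (letter_weight a1 a2 a3 a4)) i)"
    unfolding nu_eq_map_pmf using set_pmf_letter_weight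
    by (simp, subst nn_integral_measure_pmf_support[where A = "{..<4}"]) auto
  also have "\<dots> = (\<Sum>j<4. ennreal (letter_weight a1 a2 a3 a4 j) * f j)"
    using assms by (simp add: pmf_embed_pmf[OF letter_weight_nonneg nn_integral_letter_weight] mult.commute)
  finally show ?thesis .
qed

lemma gen_letter_of_nu:
  assumes "inj_on (gen P d t) {..<4}" "g \<in> set_pmf (nu P d t a1 a2 a3 a4)"
  shows "gen P d t (letter_of P d t g) = g"
  using assms set_pmf_letter_weight f_the_inv_into_f[OF assms(1)]
  by (auto simp: nu_eq_map_pmf letter_of_def)

end

lemma letter_walk_nu:
  fixes P :: "complex poly"
  assumes "degree P \<ge> 2" "d \<noteq> 0" "cos t \<noteq> 0" "sin t \<noteq> 0"
    and "a1 > 0" "a2 > 0" "a3 > 0" "a4 > 0" "a1 + a2 + a3 + a4 = 1"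
  shows "letter_walk (letter_weight a1 a2 a3 a4) (nu P d t a1 a2 a3 a4) (letter_of P d t)"
proof unfold_locales
  have inj: "inj_on (gen P d t) {..<4}"
    using gen_inj_on[OF assms(1-4)] .
  show "0 < letter_weight a1 a2 a3 a4 i" if "i < 4" for i
    using that assms(5-8) by (auto simp: letter_weight_def less_Suc_eq numeral_eq_Suc)
  show "letter_weight a1 a2 a3 a4 0 + letter_weight a1 a2 a3 a4 1 + letter_weight a1 a2 a3 a4 2
      + letter_weight a1 a2 a3 a4 3 = 1"
    using assms(9) by (simp add: letter_weight_def)
  show "letter_of P d t g < 4" for g
    using the_inv_into_into[OF inj, of g "{..<4}"] by (auto simp: letter_of_def)
  show "(\<integral>\<^sup>+g. f (letter_of P d t g) \<partial>measure_pmf (nu P d t a1 a2 a3 a4))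
      = (\<Sum>j<4. ennreal (letter_weight a1 a2 a3 a4 j) * f j)" for f
    using assms(5-9) the_inv_into_f_f[OF inj] by (intro nn_integral_nu) (auto simp: letter_of_def)
qed

lemma Sn_Suc: "Sn \<omega> (Suc n) = \<omega> n \<circ> Sn \<omega> n"
proof -
  have "foldr (\<lambda>k f. f \<circ> \<omega> k) ks g = g \<circ> foldr (\<lambda>k f. f \<circ> \<omega> k) ks id" for ks g
    by (induction ks arbitrary: g) (auto simp: comp_assoc)
  then show ?thesis
    by (simp add: Sn_def)
qed

lemma reduced_walk_eval:
  assumes "d \<noteq> 0" "\<And>g. lo g < 4" "\<And>k. gen P d t (lo (\<omega> k)) = \<omega> k"
  shows "reduced (reduced_walk lo [] \<omega> n) \<and> word_eval P d t (reduced_walk lo [] \<omega> n) = Sn \<omega> n"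
proof (induction n)
  case 0
  then show ?case
    by (simp add: Sn_def)
next
  case (Suc n)
  have "set (reduced_walk lo [] \<omega> n) \<subseteq> {..<4}"
    by (rule reduced_walk_letters) (simp_all add: assms(2))
  then show ?case
    using Suc reduced_push_letter assms word_eval_push_letter[OF assms(1,2)] by (simp add: Sn_Suc)
qed

lemma not_bdd_above_if_eventually_linear:
  fixes f :: "nat \<Rightarrow> nat"
  assumes "0 < \<epsilon>" "\<forall>\<^sub>F n in sequentially. \<epsilon> * real n \<le> real (f n)"
  shows "\<not> bdd_above (range f)"
proof
  assume "bdd_above (range f)"
  then obtain B where B: "\<And>n. f n \<le> B"
    by (auto simp: bdd_above_def)
  obtain N where N: "\<And>n. N \<le> n \<Longrightarrow> \<epsilon> * real n \<le> real (f n)"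
    using assms(2) by (auto simp: eventually_sequentially)
  define n where "n = max N (nat \<lceil>real B / \<epsilon>\<rceil> + 1)"
  have "real B / \<epsilon> < real n"
    unfolding n_def by linarith
  then have "real B < \<epsilon> * real n"
    using assms(1) by (simp add: field_simps)
  also have "\<dots> \<le> real (f n)"
    using N[of n] by (simp add: n_def)
  finally show False
    using B[of n] by simp
qed

lemma AE_word_length_ge_linear:
  fixes P :: "complex poly"
  assumes "degree P \<ge> 2" "d \<noteq> 0" "cos t \<noteq> 0" "sin t \<noteq> 0"
    and "a1 > 0" "a2 > 0" "a3 > 0" "a4 > 0" "a1 + a2 + a3 + a4 = 1"
  shows "\<exists>\<epsilon>>0. AE \<omega> in PiM UNIV (\<lambda>_::nat. measure_pmf (nu P d t a1 a2 a3 a4)).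
           \<forall>\<^sub>F n in sequentially. \<epsilon> * real n \<le> real (word_length P d t (Sn \<omega> n))"
proof -
  interpret letter_walk "letter_weight a1 a2 a3 a4" "nu P d t a1 a2 a3 a4" "letter_of P d t"
    using letter_walk_nu[OF assms] .
  obtain \<epsilon> where \<epsilon>: "0 < \<epsilon>" and escape:
      "AE \<omega> in S. \<forall>\<^sub>F n in sequentially. \<epsilon> * real n < real (length (reduced_walk (letter_of P d t) [] \<omega> n))"
    using AE_linear_escape by blast
  obtain c where c: "0 < c" and length_ge:
      "\<And>w. reduced w \<Longrightarrow> c * real (length w) \<le> real (word_length P d t (word_eval P d t w))"
    using word_length_reduced_ge[OF assms(1-4)] by blast
  have inj: "inj_on (gen P d t) {..<4}"
    using gen_inj_on[OF assms(1-4)] .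
  have "AE \<omega> in S. \<forall>k. \<omega> k \<in> set_pmf (nu P d t a1 a2 a3 a4)"
    by (subst AE_all_countable) (auto intro!: AE_PiM_component AE_measure_pmf prob_space_measure_pmf)
  with escape have "AE \<omega> in S. \<forall>\<^sub>F n in sequentially. c * \<epsilon> * real n \<le> real (word_length P d t (Sn \<omega> n))"
  proof eventually_elim
    case (elim \<omega>)
    have letters: "gen P d t (letter_of P d t (\<omega> k)) = \<omega> k" for k
      using gen_letter_of_nu[OF _ _ _ _ assms(9) inj elim(2)[rule_format, of k]] assms(5-8) by simp
    have walk: "reduced (reduced_walk (letter_of P d t) [] \<omega> n)
        \<and> word_eval P d t (reduced_walk (letter_of P d t) [] \<omega> n) = Sn \<omega> n" for n
      using letter_lt4 letters by (rule reduced_walk_eval[OF assms(2)])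
    have bound: "c * \<epsilon> * real n \<le> real (word_length P d t (Sn \<omega> n))"
      if "\<epsilon> * real n < real (length (reduced_walk (letter_of P d t) [] \<omega> n))" for n
    proof -
      have "c * \<epsilon> * real n \<le> c * real (length (reduced_walk (letter_of P d t) [] \<omega> n))"
        using that c by (simp add: mult.assoc)
      also have "\<dots> \<le> real (word_length P d t (Sn \<omega> n))"
        using length_ge walk[of n] by metis
      finally show ?thesis .
    qed
    show ?case
      using elim(1) bound by (rule eventually_mono)
  qed
  then show ?thesis
    using mult_pos_pos[OF c \<epsilon>] by blast
qed

theorem mainTheorem3:
  fixes P :: "complex poly" and d :: complex and t :: real
    and a1 a2 a3 a4 :: real
  assumes "degree P \<ge> 2" and "d \<noteq> 0"
    and "0 < t" and "t < 2 * pi"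
    and "t \<noteq> pi / 2" and "t \<noteq> pi" and "t \<noteq> 3 * pi / 2"
    and "a1 > 0" and "a2 > 0" and "a3 > 0" and "a4 > 0"
    and "a1 + a2 + a3 + a4 = 1"
  shows "(AE \<omega> in PiM UNIV (\<lambda>_::nat. measure_pmf (nu P d t a1 a2 a3 a4)).
            \<not> bdd_above (range (\<lambda>n. word_length P d t (Sn \<omega> n))))
       \<and> (\<exists>\<epsilon>>0. AE \<omega> in PiM UNIV (\<lambda>_::nat. measure_pmf (nu P d t a1 a2 a3 a4)).
            \<forall>\<^sub>F n in sequentially. real (word_length P d t (Sn \<omega> n)) \<ge> \<epsilon> * real n)"
proof -
  obtain \<epsilon> where \<epsilon>: "0 < \<epsilon>" and linear:
      "AE \<omega> in PiM UNIV (\<lambda>_::nat. measure_pmf (nu P d t a1 a2 a3 a4)).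
         \<forall>\<^sub>F n in sequentially. \<epsilon> * real n \<le> real (word_length P d t (Sn \<omega> n))"
    using AE_word_length_ge_linear[OF assms(1,2) cos_sin_nonzero[OF assms(3-7)] assms(8-12)] by blast
  from linear have "AE \<omega> in PiM UNIV (\<lambda>_::nat. measure_pmf (nu P d t a1 a2 a3 a4)).
      \<not> bdd_above (range (\<lambda>n. word_length P d t (Sn \<omega> n)))"
    by (rule eventually_mono) (rule not_bdd_above_if_eventually_linear[OF \<epsilon>])
  then show ?thesis
    using linear \<epsilon> by blast
qed

end
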